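(* Let $(L,\wedge,\vee,0,1)$ and $(L',\wedge',\vee',0',1')$ be bounded lattices. Their additive Nakano mosaics $(L,\boxplus,0)$ and $(L',\boxplus',0')$ are isomorphic if and only if $L$ and $L'$ are isomorphic lattices. Likewise, their multiplicative Nakano mosaics $(L,\boxdot,1)$ and $(L',\boxdot',1')$ are isomorphic if and only if $L$ and $L'$ are isomorphic lattices.
   Context: The additive Nakano mosaic of a bounded lattice $L$ is $(L,\boxplus,0)$ with $x\boxplus y:=\{z\in L\mid x\vee y=x\vee z=z\vee y\}$; the multiplicative Nakano mosaic is $(L,\boxdot,1)$ with $x\boxdot y:=\{z\in L\mid x\wedge y=x\wedge z=z\wedge y\}$. An isomorphism of mosaics $(A,\boxplus,e)\to(A',\boxplus',e')$ is a bijection $f$ with $f(e)=e'$ and $f(x\boxplus y)=f(x)\boxplus' f(y)$ for all $x,y$. *)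

theory Defs
  imports Main
begin

definition nakano_add :: "'a::lattice \<Rightarrow> 'a \<Rightarrow> 'a set" where
  "nakano_add x y = {z. sup x y = sup x z \<and> sup x z = sup z y}"

definition nakano_mul :: "'a::lattice \<Rightarrow> 'a \<Rightarrow> 'a set" where
  "nakano_mul x y = {z. inf x y = inf x z \<and> inf x z = inf z y}"

definition mosaic_iso ::
  "('a \<Rightarrow> 'b) \<Rightarrow> ('a \<Rightarrow> 'a \<Rightarrow> 'a set) \<Rightarrow> 'a \<Rightarrow> ('b \<Rightarrow> 'b \<Rightarrow> 'b set) \<Rightarrow> 'b \<Rightarrow> bool" where
  "mosaic_iso f op e op' e' \<longleftrightarrow>
     bij f \<and> f e = e' \<and> (\<forall>x y. f ` (op x y) = op' (f x) (f y))"

definition lattice_iso :: "('a::lattice \<Rightarrow> 'b::lattice) \<Rightarrow> bool" where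
  "lattice_iso f \<longleftrightarrow> bij f \<and> (\<forall>x y. f (inf x y) = inf (f x) (f y))
                      \<and> (\<forall>x y. f (sup x y) = sup (f x) (f y))"

end

theory Submission
  imports Defs
begin

text \<open>The order is recovered from either mosaic: \<open>x \<le> y\<close> iff \<open>y \<in> x \<boxplus> y\<close>, and
  \<open>y \<le> x\<close> iff \<open>y \<in> x \<boxdot> y\<close>. Hence a mosaic isomorphism is an order isomorphism,
  i.e. a lattice isomorphism. Conversely a lattice isomorphism preserves \<open>\<boxplus>\<close> and \<open>\<boxdot>\<close>,
  which are defined from joins and meets alone, and maps \<open>0\<close> to \<open>0\<close> and \<open>1\<close> to \<open>1\<close>.\<close>

lemma le_iff_mem_nakano_add: "x \<le> y \<longleftrightarrow> y \<in> nakano_add x (y::'a::lattice)"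
  unfolding nakano_add_def by (auto simp: le_iff_sup sup_commute)

lemma le_iff_mem_nakano_mul: "y \<le> x \<longleftrightarrow> y \<in> nakano_mul x (y::'a::lattice)"
  unfolding nakano_mul_def by (auto simp: le_iff_inf inf_commute)

lemma lattice_iso_iff_order_iso:
  fixes f :: "'a::lattice \<Rightarrow> 'b::lattice"
  shows "lattice_iso f \<longleftrightarrow> bij f \<and> (\<forall>x y. x \<le> y \<longleftrightarrow> f x \<le> f y)"
proof
  assume f: "lattice_iso f"
  then have "inj f" by (simp add: lattice_iso_def bij_is_inj)
  then have "x \<le> y \<longleftrightarrow> f x \<le> f y" for x y
    using f by (metis le_iff_sup lattice_iso_def inj_eq)
  with f show "bij f \<and> (\<forall>x y. x \<le> y \<longleftrightarrow> f x \<le> f y)"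
    by (simp add: lattice_iso_def)
next
  assume "bij f \<and> (\<forall>x y. x \<le> y \<longleftrightarrow> f x \<le> f y)"
  then have bij: "bij f" and ord: "\<And>x y. x \<le> y \<longleftrightarrow> f x \<le> f y" by auto
  have f_inv: "f (inv f a) = a" for a by (simp add: bij bij_is_surj surj_f_inv_f)
  have mono_f: "mono f" and mono_inv: "mono (inv f)"
    by (auto intro!: monoI simp: ord f_inv)
  have "f (sup x y) = sup (f x) (f y)" for x y
  proof (rule order.antisym)
    have "sup x y = sup (inv f (f x)) (inv f (f y))" by (simp add: bij bij_is_inj)
    also have "\<dots> \<le> inv f (sup (f x) (f y))" by (rule mono_sup[OF mono_inv])
    finally show "f (sup x y) \<le> sup (f x) (f y)" by (simp add: ord f_inv)
    show "sup (f x) (f y) \<le> f (sup x y)" by (rule mono_sup[OF mono_f])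
  qed
  moreover have "f (inf x y) = inf (f x) (f y)" for x y
  proof (rule order.antisym)
    have "inv f (inf (f x) (f y)) \<le> inf (inv f (f x)) (inv f (f y))" by (rule mono_inf[OF mono_inv])
    also have "\<dots> = inf x y" by (simp add: bij bij_is_inj)
    finally show "inf (f x) (f y) \<le> f (inf x y)" by (simp add: ord f_inv)
    show "f (inf x y) \<le> inf (f x) (f y)" by (rule mono_inf[OF mono_f])
  qed
  ultimately show "lattice_iso f" using bij by (simp add: lattice_iso_def)
qed

lemma lattice_iso_bot:
  fixes g :: "'a::bounded_lattice \<Rightarrow> 'b::bounded_lattice"
  assumes "lattice_iso g"
  shows "g bot = bot"
proof -
  obtain u where "g u = bot" using assms by (metis lattice_iso_def bij_pointE)
  then show ?thesis using assms by (metis lattice_iso_iff_order_iso bot_least bot_unique)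
qed

lemma lattice_iso_top:
  fixes g :: "'a::bounded_lattice \<Rightarrow> 'b::bounded_lattice"
  assumes "lattice_iso g"
  shows "g top = top"
proof -
  obtain u where "g u = top" using assms by (metis lattice_iso_def bij_pointE)
  then show ?thesis using assms by (metis lattice_iso_iff_order_iso top_greatest top_unique)
qed

lemma vimage_nakano_add_lattice_iso:
  assumes "lattice_iso g"
  shows "g -` nakano_add (g x) (g y) = nakano_add x y"
proof -
  have "inj g" and "\<And>a b. sup (g a) (g b) = g (sup a b)"
    using assms by (simp_all add: lattice_iso_def bij_is_inj)
  then show ?thesis by (simp add: nakano_add_def inj_eq)
qed

lemma vimage_nakano_mul_lattice_iso:
  assumes "lattice_iso g"
  shows "g -` nakano_mul (g x) (g y) = nakano_mul x y"
proof -
  have "inj g" and "\<And>a b. inf (g a) (g b) = g (inf a b)"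
    using assms by (simp_all add: lattice_iso_def bij_is_inj)
  then show ?thesis by (simp add: nakano_mul_def inj_eq)
qed

lemma lattice_iso_imp_mosaic_iso_nakano_add:
  fixes g :: "'a::bounded_lattice \<Rightarrow> 'b::bounded_lattice"
  assumes "lattice_iso g"
  shows "mosaic_iso g nakano_add bot nakano_add bot"
proof -
  have "surj g" using assms by (simp add: lattice_iso_def bij_is_surj)
  then have "g ` nakano_add x y = nakano_add (g x) (g y)" for x y
    by (metis surj_image_vimage_eq vimage_nakano_add_lattice_iso[OF assms])
  then show ?thesis
    using assms lattice_iso_bot[OF assms] by (simp add: mosaic_iso_def lattice_iso_def)
qed

lemma lattice_iso_imp_mosaic_iso_nakano_mul:
  fixes g :: "'a::bounded_lattice \<Rightarrow> 'b::bounded_lattice"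
  assumes "lattice_iso g"
  shows "mosaic_iso g nakano_mul top nakano_mul top"
proof -
  have "surj g" using assms by (simp add: lattice_iso_def bij_is_surj)
  then have "g ` nakano_mul x y = nakano_mul (g x) (g y)" for x y
    by (metis surj_image_vimage_eq vimage_nakano_mul_lattice_iso[OF assms])
  then show ?thesis
    using assms lattice_iso_top[OF assms] by (simp add: mosaic_iso_def lattice_iso_def)
qed

lemma mosaic_iso_nakano_add_imp_lattice_iso:
  fixes f :: "'a::lattice \<Rightarrow> 'b::lattice"
  assumes f: "mosaic_iso f nakano_add e nakano_add e'"
  shows "lattice_iso f"
proof -
  have "inj f" and image: "\<And>x y. f ` nakano_add x y = nakano_add (f x) (f y)"
    using f by (simp_all add: mosaic_iso_def bij_is_inj)
  have "x \<le> y \<longleftrightarrow> f x \<le> f y" for x y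
  proof -
    have "x \<le> y \<longleftrightarrow> y \<in> nakano_add x y" by (rule le_iff_mem_nakano_add)
    also have "\<dots> \<longleftrightarrow> f y \<in> f ` nakano_add x y"
      using \<open>inj f\<close> by (rule inj_image_mem_iff[symmetric])
    also have "\<dots> \<longleftrightarrow> f y \<in> nakano_add (f x) (f y)" by (simp only: image)
    also have "\<dots> \<longleftrightarrow> f x \<le> f y" by (rule le_iff_mem_nakano_add[symmetric])
    finally show ?thesis .
  qed
  then show ?thesis using f by (simp add: lattice_iso_iff_order_iso mosaic_iso_def)
qed

lemma mosaic_iso_nakano_mul_imp_lattice_iso:
  fixes f :: "'a::lattice \<Rightarrow> 'b::lattice"
  assumes f: "mosaic_iso f nakano_mul e nakano_mul e'"
  shows "lattice_iso f"
proof -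
  have "inj f" and image: "\<And>x y. f ` nakano_mul x y = nakano_mul (f x) (f y)"
    using f by (simp_all add: mosaic_iso_def bij_is_inj)
  have "y \<le> x \<longleftrightarrow> f y \<le> f x" for x y
  proof -
    have "y \<le> x \<longleftrightarrow> y \<in> nakano_mul x y" by (rule le_iff_mem_nakano_mul)
    also have "\<dots> \<longleftrightarrow> f y \<in> f ` nakano_mul x y"
      using \<open>inj f\<close> by (rule inj_image_mem_iff[symmetric])
    also have "\<dots> \<longleftrightarrow> f y \<in> nakano_mul (f x) (f y)" by (simp only: image)
    also have "\<dots> \<longleftrightarrow> f y \<le> f x" by (rule le_iff_mem_nakano_mul[symmetric])
    finally show ?thesis .
  qed
  then show ?thesis using f by (simp add: lattice_iso_iff_order_iso mosaic_iso_def)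
qed

theorem mainTheorem19:
  fixes L :: "'a::bounded_lattice itself" and L' :: "'b::bounded_lattice itself"
  shows "((\<exists>f :: 'a \<Rightarrow> 'b. mosaic_iso f nakano_add bot nakano_add bot)
            \<longleftrightarrow> (\<exists>g :: 'a \<Rightarrow> 'b. lattice_iso g))
       \<and> ((\<exists>f :: 'a \<Rightarrow> 'b. mosaic_iso f nakano_mul top nakano_mul top)
            \<longleftrightarrow> (\<exists>g :: 'a \<Rightarrow> 'b. lattice_iso g))"
  using mosaic_iso_nakano_add_imp_lattice_iso lattice_iso_imp_mosaic_iso_nakano_add
    mosaic_iso_nakano_mul_imp_lattice_iso lattice_iso_imp_mosaic_iso_nakano_mul
  by blast

end
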